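(* Let $j$ and $k$ be natural numbers, let $\nu$ be a non-zero real number, and let $q:\mathbb{R}^n\to\mathbb{R}$ be a polynomial with highest total degree $|\beta|$. Set $\lambda = \left\lceil \frac{|\beta|-1}{2j}\right\rceil$. Then $$Q(\mathbf{x}) = \sum_{p=0}^{\lambda} (-1)^p \binom{k+p-1}{p} \nu^{-p-k}\, \Delta^{jp} q(\mathbf{x})$$ satisfies $(\Delta^j + \nu)^k Q(\mathbf{x}) = q(\mathbf{x})$, where $\Delta=\sum_{i=1}^n\partial_{x_i}^2$.
   Context: $\lceil h\rceil$ is the least integer $\ge h$; $\Delta^{r}$ denotes $r$-fold application of the Laplacian, with $\Delta^0$ the identity. *)

theory Defs
  imports "HOL-Analysis.Analysis"
begin

text \<open>Points of R^n are modelled as vectors of type real^'n, for an arbitrary finite index type 'n.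
  Multi-indices are functions 'n => nat.\<close>

definition monomial_fun :: "('n::finite \<Rightarrow> nat) \<Rightarrow> real^'n \<Rightarrow> real" where
  "monomial_fun \<alpha> x = (\<Prod>i\<in>UNIV. (x $ i) ^ (\<alpha> i))"

definition total_deg :: "('n::finite \<Rightarrow> nat) \<Rightarrow> nat" where
  "total_deg \<alpha> = (\<Sum>i\<in>UNIV. \<alpha> i)"

definition poly_fun_of_degree :: "(real^'n::finite \<Rightarrow> real) \<Rightarrow> nat \<Rightarrow> bool" where
  "poly_fun_of_degree q b \<longleftrightarrow>
     (\<exists>A c. finite A \<and> (\<forall>\<alpha>\<in>A. c \<alpha> \<noteq> (0::real)) \<and>
        (\<forall>x. q x = (\<Sum>\<alpha>\<in>A. c \<alpha> * monomial_fun \<alpha> x)) \<and>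
        (\<forall>\<alpha>\<in>A. total_deg \<alpha> \<le> b) \<and> (\<exists>\<alpha>\<in>A. total_deg \<alpha> = b))"

definition partial_deriv :: "'n::finite \<Rightarrow> (real^'n \<Rightarrow> real) \<Rightarrow> real^'n \<Rightarrow> real" where
  "partial_deriv i f x = deriv (\<lambda>t. f (x + t *\<^sub>R axis i 1)) 0"

definition laplacian :: "(real^'n::finite \<Rightarrow> real) \<Rightarrow> real^'n \<Rightarrow> real" where
  "laplacian f x = (\<Sum>i\<in>UNIV. partial_deriv i (partial_deriv i f) x)"

end

theory Submission
  imports Defs
begin

text \<open>On polynomials the operator \<open>L = \<Delta>\<^sup>j\<close> is linear, and it is nilpotent on \<open>q\<close>: every
  Laplacian lowers the degree by two, so \<open>L\<^bsup>\<lambda>+1\<^esup> q = 0\<close> as soon as \<open>2j(\<lambda>+1) > |\<beta>|\<close>.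
  Hence \<open>(L + \<nu>)\<^sup>-\<^sup>k q\<close> is given by the binomial series of \<open>\<nu>\<^sup>-\<^sup>k (1 + L/\<nu>)\<^sup>-\<^sup>k\<close>, truncated
  after the term \<open>L\<^sup>\<lambda>\<close>. Writing \<open>Q\<^sub>k\<close> for this truncated series, one checks \<open>(L + \<nu>) Q\<^sub>k\<^sub>+\<^sub>1 = Q\<^sub>k\<close>
  coefficientwise by Pascal's rule, and \<open>Q\<^sub>0 = q\<close>.\<close>

section \<open>Polynomial functions and the Laplacian\<close>

inductive poly_fun_deg_less :: "nat \<Rightarrow> (real^'n::finite \<Rightarrow> real) \<Rightarrow> bool" for d where
  zero: "poly_fun_deg_less d (\<lambda>x. 0)"
| monomial: "total_deg \<alpha> < d \<Longrightarrow> poly_fun_deg_less d (\<lambda>x. c * monomial_fun \<alpha> x)"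
| add: "poly_fun_deg_less d f \<Longrightarrow> poly_fun_deg_less d g \<Longrightarrow> poly_fun_deg_less d (\<lambda>x. f x + g x)"

lemma poly_fun_deg_less_mono:
  "poly_fun_deg_less d f \<Longrightarrow> d \<le> d' \<Longrightarrow> poly_fun_deg_less d' f"
  by (induction rule: poly_fun_deg_less.induct) (auto intro: poly_fun_deg_less.intros)

lemma poly_fun_deg_less_0: "poly_fun_deg_less 0 f \<Longrightarrow> f = (\<lambda>x. 0)"
  by (induction rule: poly_fun_deg_less.induct) auto

lemma poly_fun_deg_less_sum:
  assumes "finite A" "\<And>a. a \<in> A \<Longrightarrow> poly_fun_deg_less d (f a)"
  shows "poly_fun_deg_less d (\<lambda>x. \<Sum>a\<in>A. f a x)"
  using assms by (induction A rule: finite_induct) (auto intro: poly_fun_deg_less.intros)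

lemma poly_fun_deg_less_of_degree:
  assumes "poly_fun_of_degree q b"
  shows "poly_fun_deg_less (Suc b) q"
proof -
  obtain A c where "finite A" and q: "\<And>x. q x = (\<Sum>\<alpha>\<in>A. c \<alpha> * monomial_fun \<alpha> x)"
    and deg: "\<forall>\<alpha>\<in>A. total_deg \<alpha> \<le> b"
    using assms unfolding poly_fun_of_degree_def by blast
  have "poly_fun_deg_less (Suc b) (\<lambda>x. \<Sum>\<alpha>\<in>A. c \<alpha> * monomial_fun \<alpha> x)"
    using \<open>finite A\<close> deg by (intro poly_fun_deg_less_sum poly_fun_deg_less.monomial) auto
  moreover have "q = (\<lambda>x. \<Sum>\<alpha>\<in>A. c \<alpha> * monomial_fun \<alpha> x)"
    using q by (rule ext)
  ultimately show ?thesis by simp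
qed

lemma total_deg_fun_upd: "total_deg (\<alpha>(i := m)) + \<alpha> i = total_deg \<alpha> + m"
proof -
  have "(\<Sum>l\<in>UNIV-{i}. (\<alpha>(i := m)) l) = (\<Sum>l\<in>UNIV-{i}. \<alpha> l)"
    by (intro sum.cong) auto
  then show ?thesis
    unfolding total_deg_def by (subst (1 2) sum.remove[of UNIV i]) auto
qed

lemma monomial_fun_add_axis:
  "monomial_fun \<alpha> (x + t *\<^sub>R axis i 1) = (\<Prod>l\<in>UNIV-{i}. (x$l)^\<alpha> l) * (x$i + t)^(\<alpha> i)"
proof -
  have "monomial_fun \<alpha> (x + t *\<^sub>R axis i 1) = (\<Prod>l\<in>UNIV. (x$l + (if l = i then t else 0))^\<alpha> l)"
    unfolding monomial_fun_def by (intro prod.cong) (auto simp: axis_def)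
  also have "\<dots> = (x$i + t)^(\<alpha> i) * (\<Prod>l\<in>UNIV-{i}. (x$l + (if l = i then t else 0))^\<alpha> l)"
    by (subst prod.remove[of UNIV i]) auto
  also have "(\<Prod>l\<in>UNIV-{i}. (x$l + (if l = i then t else 0))^\<alpha> l) = (\<Prod>l\<in>UNIV-{i}. (x$l)^\<alpha> l)"
    by (intro prod.cong) auto
  finally show ?thesis by simp
qed

lemma monomial_fun_upd:
  "monomial_fun (\<alpha>(i:=m)) x = (\<Prod>l\<in>UNIV-{i}. (x$l)^\<alpha> l) * (x$i)^m"
proof -
  have "monomial_fun (\<alpha>(i:=m)) x = (x$i)^m * (\<Prod>l\<in>UNIV-{i}. (x$l)^((\<alpha>(i:=m)) l))"
    unfolding monomial_fun_def by (subst prod.remove[of UNIV i]) auto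
  also have "(\<Prod>l\<in>UNIV-{i}. (x$l)^((\<alpha>(i:=m)) l)) = (\<Prod>l\<in>UNIV-{i}. (x$l)^\<alpha> l)"
    by (intro prod.cong) auto
  finally show ?thesis by (simp only: mult.commute)
qed

lemma has_real_derivative_monomial_fun_axis:
  "((\<lambda>t. monomial_fun \<alpha> (x + t *\<^sub>R axis i 1)) has_real_derivative
     real (\<alpha> i) * monomial_fun (\<alpha>(i := \<alpha> i - 1)) x) (at 0)"
proof -
  have "((\<lambda>t. (\<Prod>l\<in>UNIV-{i}. (x$l)^\<alpha> l) * (x$i + t)^(\<alpha> i)) has_real_derivative
     (\<Prod>l\<in>UNIV-{i}. (x$l)^\<alpha> l) * (real (\<alpha> i) * (x$i + 0)^(\<alpha> i - 1) * 1)) (at 0)"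
    by (intro DERIV_cmult DERIV_power) (auto intro!: derivative_eq_intros)
  then show ?thesis by (simp add: monomial_fun_add_axis monomial_fun_upd mult_ac)
qed

lemma partial_deriv_eqI:
  "((\<lambda>t. f (x + t *\<^sub>R axis i 1)) has_real_derivative D) (at 0) \<Longrightarrow> partial_deriv i f x = D"
  unfolding partial_deriv_def by (rule DERIV_imp_deriv)

lemma partial_deriv_monomial:
  "partial_deriv i (\<lambda>x. c * monomial_fun \<alpha> x) =
     (\<lambda>x. c * real (\<alpha> i) * monomial_fun (\<alpha>(i := \<alpha> i - 1)) x)"
  unfolding mult.assoc
  by (rule ext, intro partial_deriv_eqI DERIV_cmult has_real_derivative_monomial_fun_axis)

lemma partial_deriv_zero: "partial_deriv i (\<lambda>x. 0) = (\<lambda>x. 0)"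
  by (rule ext, rule partial_deriv_eqI) (rule DERIV_const)

lemma has_partial_deriv_poly_fun:
  assumes "poly_fun_deg_less d f"
  shows "((\<lambda>t. f (x + t *\<^sub>R axis i 1)) has_real_derivative partial_deriv i f x) (at 0)"
  using assms
proof (induction rule: poly_fun_deg_less.induct)
  case zero
  show ?case unfolding partial_deriv_zero by (rule DERIV_const)
next
  case (monomial \<alpha> c)
  show ?case unfolding partial_deriv_monomial mult.assoc
    by (rule DERIV_cmult, rule has_real_derivative_monomial_fun_axis)
next
  case (add f g)
  from add.IH have "((\<lambda>t. f (x + t *\<^sub>R axis i 1) + g (x + t *\<^sub>R axis i 1)) has_real_derivative
      partial_deriv i f x + partial_deriv i g x) (at 0)"
    by (rule DERIV_add)
  moreover from this have "partial_deriv i (\<lambda>x. f x + g x) x = partial_deriv i f x + partial_deriv i g x"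
    by (rule partial_deriv_eqI)
  ultimately show ?case by simp
qed

lemma partial_deriv_lincomb:
  assumes "finite S" "\<And>p. p \<in> S \<Longrightarrow> poly_fun_deg_less d (f p)"
  shows "partial_deriv i (\<lambda>x. \<Sum>p\<in>S. a p * f p x) = (\<lambda>x. \<Sum>p\<in>S. a p * partial_deriv i (f p) x)"
proof
  fix x
  show "partial_deriv i (\<lambda>x. \<Sum>p\<in>S. a p * f p x) x = (\<Sum>p\<in>S. a p * partial_deriv i (f p) x)"
    using assms(2) by (intro partial_deriv_eqI DERIV_sum DERIV_cmult has_partial_deriv_poly_fun)
qed

lemma partial_deriv_add:
  assumes "poly_fun_deg_less d f" "poly_fun_deg_less d' g"
  shows "partial_deriv i (\<lambda>x. f x + g x) = (\<lambda>x. partial_deriv i f x + partial_deriv i g x)"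
proof
  fix x
  show "partial_deriv i (\<lambda>x. f x + g x) x = partial_deriv i f x + partial_deriv i g x"
    using has_partial_deriv_poly_fun[OF assms(1)] has_partial_deriv_poly_fun[OF assms(2)]
    by (intro partial_deriv_eqI DERIV_add)
qed

lemma poly_fun_deg_less_partial_deriv:
  assumes "poly_fun_deg_less d f"
  shows "poly_fun_deg_less (d - 1) (partial_deriv i f)"
  using assms
proof (induction rule: poly_fun_deg_less.induct)
  case zero
  show ?case unfolding partial_deriv_zero by (rule poly_fun_deg_less.zero)
next
  case (monomial \<alpha> c)
  show ?case
  proof (cases "\<alpha> i = 0")
    case True
    then show ?thesis by (simp add: partial_deriv_monomial poly_fun_deg_less.zero)
  next
    case False
    have "total_deg (\<alpha>(i := \<alpha> i - 1)) < d - 1"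
      using total_deg_fun_upd[of \<alpha> i "\<alpha> i - 1"] False monomial by linarith
    then show ?thesis
      unfolding partial_deriv_monomial by (rule poly_fun_deg_less.monomial)
  qed
next
  case (add f g)
  then show ?case by (simp add: partial_deriv_add poly_fun_deg_less.add)
qed

lemma poly_fun_deg_less_laplacian:
  assumes "poly_fun_deg_less d f"
  shows "poly_fun_deg_less (d - 2) (laplacian f)"
proof -
  have "poly_fun_deg_less (d - 1 - 1) (partial_deriv i (partial_deriv i f))" for i
    using assms by (intro poly_fun_deg_less_partial_deriv)
  moreover have "d - 1 - 1 = d - 2" by simp
  ultimately show ?thesis
    unfolding laplacian_def[abs_def] by (intro poly_fun_deg_less_sum) simp_all
qed

lemma poly_fun_deg_less_laplacian_power:
  "poly_fun_deg_less d f \<Longrightarrow> poly_fun_deg_less (d - 2 * m) ((laplacian ^^ m) f)"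
  by (induction m) (auto dest: poly_fun_deg_less_laplacian simp: diff_diff_add)

lemma laplacian_power_eq_0:
  "poly_fun_deg_less d f \<Longrightarrow> d \<le> 2 * m \<Longrightarrow> (laplacian ^^ m) f = (\<lambda>x. 0)"
  by (metis poly_fun_deg_less_0 poly_fun_deg_less_laplacian_power diff_is_0_eq)

lemma laplacian_lincomb:
  assumes "finite S" "\<And>p. p \<in> S \<Longrightarrow> poly_fun_deg_less d (f p)"
  shows "laplacian (\<lambda>x. \<Sum>p\<in>S. a p * f p x) = (\<lambda>x. \<Sum>p\<in>S. a p * laplacian (f p) x)"
proof -
  have "partial_deriv i (partial_deriv i (\<lambda>x. \<Sum>p\<in>S. a p * f p x)) =
      (\<lambda>x. \<Sum>p\<in>S. a p * partial_deriv i (partial_deriv i (f p)) x)" for i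
  proof -
    have "partial_deriv i (\<lambda>x. \<Sum>p\<in>S. a p * partial_deriv i (f p) x) =
        (\<lambda>x. \<Sum>p\<in>S. a p * partial_deriv i (partial_deriv i (f p)) x)"
      using assms(1) by (rule partial_deriv_lincomb[where d = "d - 1"])
        (rule poly_fun_deg_less_partial_deriv[OF assms(2)])
    moreover have "partial_deriv i (\<lambda>x. \<Sum>p\<in>S. a p * f p x) = (\<lambda>x. \<Sum>p\<in>S. a p * partial_deriv i (f p) x)"
      using assms by (rule partial_deriv_lincomb)
    ultimately show ?thesis by simp
  qed
  then show ?thesis
    unfolding laplacian_def by (simp add: sum_distrib_left) (rule ext, rule sum.swap)
qed

lemma laplacian_power_lincomb:
  assumes "finite S" "\<And>p. p \<in> S \<Longrightarrow> poly_fun_deg_less d (f p)"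
  shows "(laplacian ^^ m) (\<lambda>x. \<Sum>p\<in>S. a p * f p x) = (\<lambda>x. \<Sum>p\<in>S. a p * (laplacian ^^ m) (f p) x)"
proof (induction m)
  case 0
  show ?case by simp
next
  case (Suc m)
  have "poly_fun_deg_less (d - 2 * m) ((laplacian ^^ m) (f p))" if "p \<in> S" for p
    using assms(2)[OF that] by (rule poly_fun_deg_less_laplacian_power)
  with assms(1) have "laplacian (\<lambda>x. \<Sum>p\<in>S. a p * (laplacian ^^ m) (f p) x) =
      (\<lambda>x. \<Sum>p\<in>S. a p * laplacian ((laplacian ^^ m) (f p)) x)"
    by (rule laplacian_lincomb)
  with Suc.IH show ?case by simp
qed

section \<open>Inverting \<open>(L + \<nu>)\<^sup>k\<close> for a nilpotent \<open>L\<close>\<close>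

text \<open>The Taylor coefficients of \<open>(\<nu> + z) powi (-k)\<close> at \<open>z = 0\<close>.\<close>
definition resolvent_coeff :: "real \<Rightarrow> nat \<Rightarrow> nat \<Rightarrow> real" where
  "resolvent_coeff \<nu> k p = (-1) ^ p * real ((k + p - 1) choose p) * \<nu> powi (- (int p + int k))"

lemma resolvent_coeff_altdef:
  "resolvent_coeff \<nu> k p = (-1) ^ p * real ((k + p - 1) choose p) * inverse \<nu> ^ (p + k)"
  unfolding resolvent_coeff_def by (metis of_nat_add power_int_minus power_int_of_nat power_inverse)

lemma resolvent_coeff_0_left: "resolvent_coeff \<nu> 0 p = (if p = 0 then 1 else 0)"
  by (simp add: resolvent_coeff_altdef binomial_eq_0)

lemma resolvent_coeff_Suc_0:
  "\<nu> \<noteq> 0 \<Longrightarrow> \<nu> * resolvent_coeff \<nu> (Suc k) 0 = resolvent_coeff \<nu> k 0"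
  by (simp add: resolvent_coeff_altdef field_simps)

lemma resolvent_coeff_Suc_Suc:
  assumes "\<nu> \<noteq> 0"
  shows "resolvent_coeff \<nu> (Suc k) p + \<nu> * resolvent_coeff \<nu> (Suc k) (Suc p) = resolvent_coeff \<nu> k (Suc p)"
proof -
  let ?w = "inverse \<nu>"
  have pascal: "real (Suc (k + p) choose Suc p) = real (k + p choose p) + real (k + p choose Suc p)"
    by simp
  have shift: "\<nu> * ?w ^ (Suc p + Suc k) = ?w ^ (p + Suc k)"
    using assms by (simp add: mult.assoc[symmetric])
  have "resolvent_coeff \<nu> (Suc k) p + \<nu> * resolvent_coeff \<nu> (Suc k) (Suc p)
      = (-1) ^ p * real (k + p choose p) * ?w ^ (p + Suc k)
        - (-1) ^ p * real (Suc (k + p) choose Suc p) * (\<nu> * ?w ^ (Suc p + Suc k))"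
    unfolding resolvent_coeff_altdef by (simp add: mult_ac)
  also have "\<dots> = - ((-1) ^ p * real (k + p choose Suc p) * ?w ^ (p + Suc k))"
    unfolding shift pascal by (simp add: algebra_simps)
  also have "\<dots> = resolvent_coeff \<nu> k (Suc p)"
    unfolding resolvent_coeff_altdef by simp
  finally show ?thesis .
qed

lemma resolvent_sum_shift:
  assumes "\<nu> \<noteq> 0" and "s (Suc n) = 0"
  shows "(\<Sum>p\<le>n. resolvent_coeff \<nu> (Suc k) p * s (Suc p)) + \<nu> * (\<Sum>p\<le>n. resolvent_coeff \<nu> (Suc k) p * s p)
    = (\<Sum>p\<le>n. resolvent_coeff \<nu> k p * s p)"
proof -
  let ?c = "resolvent_coeff \<nu>"
  have "(\<Sum>p\<le>n. ?c (Suc k) p * s (Suc p)) + \<nu> * (\<Sum>p\<le>n. ?c (Suc k) p * s p)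
      = (\<Sum>p<n. ?c (Suc k) p * s (Suc p)) + \<nu> * (?c (Suc k) 0 * s 0 + (\<Sum>p<n. ?c (Suc k) (Suc p) * s (Suc p)))"
  proof -
    have "(\<Sum>p\<le>n. ?c (Suc k) p * s (Suc p)) = (\<Sum>p<n. ?c (Suc k) p * s (Suc p))"
      using assms(2) by (simp add: lessThan_Suc_atMost[symmetric])
    then show ?thesis by (simp only: sum.atMost_shift)
  qed
  also have "\<dots> = \<nu> * ?c (Suc k) 0 * s 0 + (\<Sum>p<n. (?c (Suc k) p + \<nu> * ?c (Suc k) (Suc p)) * s (Suc p))"
    by (simp add: algebra_simps sum.distrib sum_distrib_left)
  also have "\<dots> = ?c k 0 * s 0 + (\<Sum>p<n. ?c k (Suc p) * s (Suc p))"
    using assms(1) by (simp add: resolvent_coeff_Suc_0 resolvent_coeff_Suc_Suc)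
  also have "\<dots> = (\<Sum>p\<le>n. ?c k p * s p)"
    by (simp add: sum.atMost_shift)
  finally show ?thesis .
qed

lemma funpow_resolvent_sum:
  fixes L :: "('a \<Rightarrow> real) \<Rightarrow> 'a \<Rightarrow> real" and g :: "nat \<Rightarrow> 'a \<Rightarrow> real"
  assumes "\<nu> \<noteq> 0"
    and L: "\<And>c. L (\<lambda>x. \<Sum>p\<le>n. c p * g p x) = (\<lambda>x. \<Sum>p\<le>n. c p * g (Suc p) x)"
    and nilpotent: "g (Suc n) = (\<lambda>x. 0)"
  shows "((\<lambda>f x. L f x + \<nu> * f x) ^^ k) (\<lambda>x. \<Sum>p\<le>n. resolvent_coeff \<nu> k p * g p x) = g 0"
proof (induction k)
  case 0
  show ?case by (rule ext) (simp add: resolvent_coeff_0_left sum.atMost_shift)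
next
  case (Suc k)
  have "(\<lambda>f x. L f x + \<nu> * f x) (\<lambda>x. \<Sum>p\<le>n. resolvent_coeff \<nu> (Suc k) p * g p x)
      = (\<lambda>x. \<Sum>p\<le>n. resolvent_coeff \<nu> k p * g p x)"
    unfolding L
  proof
    fix x
    show "(\<Sum>p\<le>n. resolvent_coeff \<nu> (Suc k) p * g (Suc p) x) + \<nu> * (\<Sum>p\<le>n. resolvent_coeff \<nu> (Suc k) p * g p x)
        = (\<Sum>p\<le>n. resolvent_coeff \<nu> k p * g p x)"
      using nilpotent by (intro resolvent_sum_shift[OF assms(1)]) simp
  qed
  then show ?case by (simp add: funpow_Suc_right Suc.IH del: funpow.simps)
qed

theorem corollary5p4:
  fixes j k b :: nat and \<nu> :: real and q :: "real^'n::finite \<Rightarrow> real"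
  assumes "j \<ge> 1" and "k \<ge> 1" and "\<nu> \<noteq> 0"
    and "poly_fun_of_degree q b"
  defines "lam \<equiv> nat \<lceil>(real b - 1) / (2 * real j)\<rceil>"
  defines "Q \<equiv> (\<lambda>x. \<Sum>p = 0..lam. (-1) ^ p * real ((k + p - 1) choose p) * \<nu> powi (- (int p + int k))
                      * (laplacian ^^ (j * p)) q x)"
  shows "((\<lambda>f x. (laplacian ^^ j) f x + \<nu> * f x) ^^ k) Q = q"
proof -
  define g where "g p = (laplacian ^^ (j * p)) q" for p
  have q_deg: "poly_fun_deg_less (Suc b) q"
    using assms(4) by (rule poly_fun_deg_less_of_degree)
  have g_deg: "poly_fun_deg_less (Suc b) (g p)" for p
    unfolding g_def using poly_fun_deg_less_laplacian_power[OF q_deg] by (rule poly_fun_deg_less_mono) simp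
  have L: "(laplacian ^^ j) (\<lambda>x. \<Sum>p\<le>lam. c p * g p x) = (\<lambda>x. \<Sum>p\<le>lam. c p * g (Suc p) x)" for c
    using g_deg by (simp add: laplacian_power_lincomb[where d = "Suc b"] g_def mult_Suc_right funpow_add)
  have nilpotent: "g (Suc lam) = (\<lambda>x. 0)"
  proof -
    have "(real b - 1) / (2 * real j) \<le> real lam"
      unfolding lam_def by (rule real_nat_ceiling_ge)
    then have "real (Suc b) \<le> real (2 * (j * Suc lam))"
      using assms(1) by (simp add: divide_le_eq algebra_simps)
    then show ?thesis
      unfolding g_def by (intro laplacian_power_eq_0[OF q_deg]) (simp only: of_nat_le_iff)
  qed
  have "Q = (\<lambda>x. \<Sum>p\<le>lam. resolvent_coeff \<nu> k p * g p x)"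
    unfolding Q_def g_def resolvent_coeff_def atLeast0AtMost ..
  moreover have "g 0 = q"
    unfolding g_def by simp
  ultimately show ?thesis
    using funpow_resolvent_sum[OF assms(3) L nilpotent] by simp
qed

end
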